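(* Let $N(n)=|\{w\in\mathcal{L}: |w|\le n\}|$ be the number of consistent outcome words of length at most $n$. Then there are constants $0<c_1\le c_2$ such that $c_1 n\le \log_2 N(n)\le c_2 n$ for all $n\ge 1$. In particular the number of binary hidden variables needed to determine all possible outcome sequences of length up to $n$ grows linearly in $n$, i.e. of the same order as $\log_2|\{w\in\tilde\Sigma^*:|w|\le n\}|$.
   Context: Let $\Sigma=\{A,B,C,a,b,c,\alpha,\beta,\gamma\}$ be nine observables arranged in a $3\times 3$ square with rows $(A,B,C)$, $(a,b,c)$, $(\alpha,\beta,\gamma)$. The six \emph{contexts} are the three rows $\{A,B,C\},\{a,b,c\},\{\alpha,\beta,\gamma\}$ and the three columns $\{A,a,\alpha\},\{B,b,\beta\},\{C,c,\gamma\}$. Each context has a sign: $-1$ for $\{C,c,\gamma\}$ and $+1$ for the other five. Two distinct observables are \emph{compatible} if they lie in a common context, and \emph{incompatible} otherwise. Let $\tilde\Sigma=\{X,\tilde X: X\in\Sigma\}$ (18 letters); the letter $X$ means "observable $X$ measured with value $1$" and $\tilde X$ means "$X$ measured with value $-1$". For a word $w=t_1\cdots t_m\in\tilde\Sigma^*$ define inductively partial assignments $v_0,\dots,v_m:\Sigma\rightharpoonup\{1,-1\}$ (an observable in $\mathrm{dom}(v_i)$ is \emph{determined} after step $i$, with value $v_i(X)$), and whether $w$ is consistent: $v_0$ is the empty assignment. Given $v_{i-1}$, let $t_i$ record observable $X$ with value $\varepsilon$. If $X\in\mathrm{dom}(v_{i-1})$ and $v_{i-1}(X)\ne\varepsilon$,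 then $w$ is \emph{inconsistent}. Otherwise let $u$ be the restriction of $v_{i-1}$ to observables that are equal to or compatible with $X$, extended by $u(X)=\varepsilon$; then $v_i$ is obtained from $u$ by repeatedly doing the following until nothing changes: whenever a context has exactly two of its observables in the domain, assign the third observable the value making the product of the three values equal to the sign of that context. The word $w$ is \emph{consistent} if no step is inconsistent; $\mathcal{L}$ is the set of consistent words (it contains the empty word). *)

theory Defs
  imports Complex_Main
begin

datatype obs = OA | OB | OC | Oa | Ob | Oc | Oalpha | Obeta | Ogamma

definition contexts :: "(obs list \<times> int) list" where
  "contexts =
     [([OA, OB, OC], 1), ([Oa, Ob, Oc], 1), ([Oalpha, Obeta, Ogamma], 1),
      ([OA, Oa, Oalpha], 1), ([OB, Ob, Obeta], 1), ([OC, Oc, Ogamma], -1)]"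

definition compatible :: "obs \<Rightarrow> obs \<Rightarrow> bool" where
  "compatible X Y \<longleftrightarrow> X \<noteq> Y \<and> (\<exists>(K, s) \<in> set contexts. X \<in> set K \<and> Y \<in> set K)"

type_synonym letter = "obs \<times> int"

definition letters :: "letter set" where
  "letters = {(X, e). e = 1 \<or> e = -1}"

type_synonym assignment = "obs \<Rightarrow> int option"

definition forces :: "assignment \<Rightarrow> obs \<Rightarrow> obs list \<times> int \<Rightarrow> bool" where
  "forces v Z Ks \<longleftrightarrow> Z \<in> set (fst Ks) \<and> v Z = None \<and>
      card {Y \<in> set (fst Ks). v Y \<noteq> None} = 2"

definition forced_value :: "assignment \<Rightarrow> obs \<Rightarrow> obs list \<times> int \<Rightarrow> int" where
  "forced_value v Z Ks = snd Ks * prod_list (map (\<lambda>Y. the (v Y)) (filter (\<lambda>Y. Y \<noteq> Z) (fst Ks)))"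

text \<open>One round of propagation (every forced observable receives its forced value;
  if several contexts force it, the first in the list is used).\<close>
definition prop_step :: "assignment \<Rightarrow> assignment" where
  "prop_step v = (\<lambda>Z. case v Z of
       Some e \<Rightarrow> Some e
     | None \<Rightarrow> (case find (forces v Z) contexts of
                  None \<Rightarrow> None
                | Some Ks \<Rightarrow> Some (forced_value v Z Ks)))"

text \<open>Repeat until nothing changes; since every non-trivial round adds at least one of the
  nine observables, nine rounds reach the fixpoint.\<close>
definition propagate :: "assignment \<Rightarrow> assignment" where
  "propagate v = (prop_step ^^ 9) v"

definition update :: "assignment \<Rightarrow> letter \<Rightarrow> assignment" where
  "update v t = (case t of (X, e) \<Rightarrow>
      propagate ((\<lambda>Y. if Y = X \<or> compatible X Y then v Y else None)(X := Some e)))"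

fun consistent_from :: "assignment \<Rightarrow> letter list \<Rightarrow> bool" where
  "consistent_from v [] = True"
| "consistent_from v ((X, e) # w) =
     ((case v X of None \<Rightarrow> True | Some e' \<Rightarrow> e' = e) \<and> consistent_from (update v (X, e)) w)"

definition consistent :: "letter list \<Rightarrow> bool" where
  "consistent w = consistent_from Map.empty w"

definition L :: "letter list set" where
  "L = {w. w \<in> lists letters \<and> consistent w}"

definition N :: "nat \<Rightarrow> nat" where
  "N n = card {w \<in> L. length w \<le> n}"

end

theory Submission
  imports Defs
begin

text \<open>Two observables that share no context can be measured alternately forever: after each
  measurement only the last observable is determined, no context ever contains two determined
  observables, so nothing propagates and no word of this shape is inconsistent. Alternating
  between A and b with arbitrary values gives \<open>2^n\<close> consistent words of length \<open>n\<close>.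
  Conversely there are at most \<open>19^n\<close> words of length at most \<open>n\<close> over the 18 letters.\<close>

definition incompatible :: "obs \<Rightarrow> obs \<Rightarrow> bool" where
  "incompatible X Y \<longleftrightarrow> X \<noteq> Y \<and> \<not> compatible X Y"

lemma compatible_sym: "compatible X Y \<longleftrightarrow> compatible Y X"
  by (auto simp: compatible_def)

lemma incompatible_sym: "incompatible X Y \<longleftrightarrow> incompatible Y X"
  by (auto simp: incompatible_def compatible_sym)

lemma incompatible_A_b: "incompatible OA Ob"
  by (simp add: incompatible_def compatible_def contexts_def)

lemma not_forces_singleton: "\<not> forces [X \<mapsto> e] Z Ks"
proof
  assume "forces [X \<mapsto> e] Z Ks"
  then have "card {Y \<in> set (fst Ks). [X \<mapsto> e] Y \<noteq> None} = 2"
    by (simp add: forces_def)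
  moreover have "card {Y \<in> set (fst Ks). [X \<mapsto> e] Y \<noteq> None} \<le> card {X}"
    by (rule card_mono) auto
  ultimately show False by simp
qed

lemma propagate_singleton: "propagate [X \<mapsto> e] = [X \<mapsto> e]"
proof -
  have "find (forces [X \<mapsto> e] Z) contexts = None" for Z
    by (simp add: find_None_iff not_forces_singleton)
  then have step: "prop_step [X \<mapsto> e] = [X \<mapsto> e]"
    by (simp add: prop_step_def fun_eq_iff split: option.split)
  have "(prop_step ^^ k) [X \<mapsto> e] = [X \<mapsto> e]" for k
    by (induction k) (simp_all only: funpow.simps comp_apply id_apply step)
  then show ?thesis by (simp add: propagate_def)
qed

lemma update_isolated:
  assumes "\<And>Y. v Y \<noteq> None \<Longrightarrow> incompatible X Y"
  shows "update v (X, e) = [X \<mapsto> e]"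
proof -
  have "(\<lambda>Y. if Y = X \<or> compatible X Y then v Y else None)(X := Some e) = [X \<mapsto> e]"
    using assms by (fastforce simp: fun_eq_iff incompatible_def)
  then show ?thesis by (simp add: update_def propagate_singleton)
qed

lemma consistent_from_successively_incompatible:
  assumes "successively incompatible (Y # map fst w)"
  shows "consistent_from [Y \<mapsto> d] w"
  using assms
proof (induction w arbitrary: Y d)
  case Nil
  then show ?case by simp
next
  case (Cons t w)
  obtain X e where t: "t = (X, e)" by fastforce
  have XY: "incompatible X Y" and rest: "successively incompatible (X # map fst w)"
    using Cons.prems by (auto simp: t incompatible_sym)
  then have undetermined: "[Y \<mapsto> d] X = None" by (simp add: incompatible_def)
  have upd: "update [Y \<mapsto> d] (X, e) = [X \<mapsto> e]"
    using XY by (intro update_isolated) (auto split: if_splits)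
  show ?case
    unfolding t consistent_from.simps undetermined upd option.case simp_thms
    by (rule Cons.IH[OF rest])
qed

lemma consistent_successively_incompatible:
  assumes "successively incompatible (map fst w)"
  shows "consistent w"
proof (cases w)
  case Nil
  then show ?thesis by (simp add: consistent_def)
next
  case (Cons t w')
  obtain X e where t: "t = (X, e)" by fastforce
  have "update Map.empty (X, e) = [X \<mapsto> e]"
    by (rule update_isolated) simp
  moreover have "successively incompatible (X # map fst w')"
    using assms by (simp add: Cons t)
  ultimately show ?thesis
    using consistent_from_successively_incompatible
    by (simp add: consistent_def Cons t del: update_def)
qed

fun alternating_word :: "obs \<Rightarrow> obs \<Rightarrow> int list \<Rightarrow> letter list" where
  "alternating_word X Y [] = []"
| "alternating_word X Y (e # es) = (X, e) # alternating_word Y X es"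

lemma map_snd_alternating_word: "map snd (alternating_word X Y es) = es"
  by (induction es arbitrary: X Y) auto

lemma length_alternating_word: "length (alternating_word X Y es) = length es"
  by (induction es arbitrary: X Y) auto

lemma alternating_word_in_lists_letters:
  "set es \<subseteq> {1, -1} \<Longrightarrow> alternating_word X Y es \<in> lists letters"
  by (induction es arbitrary: X Y) (auto simp: letters_def)

lemma successively_alternating_word:
  assumes "incompatible X Y"
  shows "successively incompatible (map fst (alternating_word X Y es))"
  using assms
proof (induction es arbitrary: X Y)
  case Nil
  then show ?case by simp
next
  case (Cons e es)
  then show ?case
    by (cases es) (auto simp: successively_Cons incompatible_sym)
qed

lemma letters_eq: "letters = UNIV \<times> {1, -1}"
  by (auto simp: letters_def)

lemma UNIV_obs: "(UNIV :: obs set) = {OA, OB, OC, Oa, Ob, Oc, Oalpha, Obeta, Ogamma}"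
  using obs.exhaust by auto

lemma card_letters: "card letters = 18"
  by (simp add: letters_eq card_cartesian_product UNIV_obs)

lemma finite_letters: "finite letters"
  by (simp add: letters_eq UNIV_obs)

lemma card_lists_length_le_bound:
  assumes "finite A"
  shows "card {xs. set xs \<subseteq> A \<and> length xs \<le> n} \<le> (card A + 1) ^ n"
proof -
  have "card {xs. set xs \<subseteq> A \<and> length xs \<le> n} = (\<Sum>i\<le>n. card A ^ i)"
    by (rule card_lists_length_le[OF assms])
  also have "\<dots> \<le> (\<Sum>i\<le>n. (n choose i) * card A ^ i * 1 ^ (n - i))"
    by (rule sum_mono) (simp add: Suc_le_eq)
  also have "\<dots> = (card A + 1) ^ n"
    using binomial_ring[of "card A" 1 n] by simp
  finally show ?thesis .
qed

lemma words_le_subset: "{w \<in> L. length w \<le> n} \<subseteq> {xs. set xs \<subseteq> letters \<and> length xs \<le> n}"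
  by (auto simp: L_def)

lemma finite_words_le: "finite {w \<in> L. length w \<le> n}"
  by (rule finite_subset[OF words_le_subset finite_lists_length_le[OF finite_letters]])

lemma N_upper_bound: "N n \<le> 19 ^ n"
proof -
  have "N n \<le> card {xs. set xs \<subseteq> letters \<and> length xs \<le> n}"
    unfolding N_def
    by (rule card_mono[OF finite_lists_length_le[OF finite_letters] words_le_subset])
  also have "\<dots> \<le> 19 ^ n"
    using card_lists_length_le_bound[OF finite_letters] by (simp add: card_letters)
  finally show ?thesis .
qed

lemma N_lower_bound: "2 ^ n \<le> N n"
proof -
  let ?S = "{es. set es \<subseteq> {1, -1::int} \<and> length es = n}"
  let ?w = "alternating_word OA Ob"
  have "inj_on ?w ?S"
    by (metis inj_onI map_snd_alternating_word)
  then have "card (?w ` ?S) = 2 ^ n"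
    using card_lists_length_eq[of "{1, -1::int}" n] by (simp add: card_image numeral_2_eq_2)
  moreover have "?w es \<in> {w \<in> L. length w \<le> n}" if "es \<in> ?S" for es
  proof -
    have "consistent (?w es)"
      by (intro consistent_successively_incompatible successively_alternating_word
          incompatible_A_b)
    moreover have "?w es \<in> lists letters"
      using that by (intro alternating_word_in_lists_letters) simp
    ultimately show ?thesis
      using that by (simp add: L_def length_alternating_word)
  qed
  then have "card (?w ` ?S) \<le> N n"
    unfolding N_def by (intro card_mono finite_words_le image_subsetI)
  ultimately show ?thesis by simp
qed

lemma log_between_powers:
  fixes x a b :: real
  assumes "1 < a" "0 < b" "a ^ n \<le> x" "x \<le> b ^ n"
  shows "real n * log 2 a \<le> log 2 x" "log 2 x \<le> real n * log 2 b"
proof -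
  have "0 < a ^ n" using assms(1) by simp
  then have "0 < x" using assms(3) by linarith
  have "log 2 (a ^ n) \<le> log 2 x" using \<open>0 < a ^ n\<close> assms(3) by simp
  then show "real n * log 2 a \<le> log 2 x" using assms(1) by (simp add: log_nat_power)
  have "log 2 x \<le> log 2 (b ^ n)" using \<open>0 < x\<close> assms(4) by simp
  then show "log 2 x \<le> real n * log 2 b" using assms(2) by (simp add: log_nat_power)
qed

theorem mainTheorem6:
  shows "\<exists>c1 c2 :: real. 0 < c1 \<and> c1 \<le> c2 \<and>
           (\<forall>n::nat. n \<ge> 1 \<longrightarrow>
              c1 * real n \<le> log 2 (real (N n)) \<and> log 2 (real (N n)) \<le> c2 * real n)"
proof (intro exI conjI allI impI)
  fix n :: nat
  have "(2::real) ^ n \<le> real (N n)" "real (N n) \<le> (19::real) ^ n"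
    using N_lower_bound[of n] N_upper_bound[of n] by (simp_all flip: of_nat_power)
  from log_between_powers[OF _ _ this] show
    "1 * real n \<le> log 2 (real (N n))" "log 2 (real (N n)) \<le> log 2 19 * real n"
    by (simp_all add: mult.commute)
qed simp_all

end
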